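(* With $n_1,n_2,c,\varepsilon,\omega,\Omega$ as below and $\mathcal{O}\subset\mathbb{R}^2_+$ bounded, for $\gamma>0$, $\tau>0$ let $\mathcal{O}_0(\gamma)$ be the set of $\xi\in\mathcal{O}$ such that for all $k\in\mathbb{Z}^2\setminus\{0\}$ and all $i,j\in\mathbb{Z}_1$: $|\langle k,\omega(\xi)\rangle|\ge\gamma|k|^{-\tau}$; $|\langle k,\omega(\xi)\rangle\pm\Omega_j(\xi)|\ge\gamma|j|^{2}|k|^{-\tau}$; $|\langle k,\omega(\xi)\rangle\pm(\Omega_i(\xi)+\Omega_j(\xi))|\ge\gamma(|i|+|j|)^2|k|^{-\tau}$; $|\langle k,\omega(\xi)\rangle+\Omega_i(\xi)-\Omega_j(\xi)|\ge\gamma(|i|-|j|)(|i|+|j|)|k|^{-\tau}$ whenever $|i|\ne|j|$; $|\langle k,\omega(\xi)\rangle+\Omega_j(\xi)-\Omega_{-j}(\xi)|\ge\gamma|j||k|^{-\tau}$ (whenever $j,-j\in\mathbb{Z}_1$). Then for $\tau$ sufficiently large there exist $\gamma_0>0$ and $C>0$ (independent of $\gamma$) such that $\mathrm{meas}(\mathcal{O}\setminus\mathcal{O}_0(\gamma))\le C\gamma$ for all $0<\gamma\le\gamma_0$.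
   Context: $n_1,n_2$ are integers with $n_2>n_1>0$, $n_1$ odd, $n_2-n_1=4$; $c>0$, $\varepsilon>0$ with $\varepsilon^{-4}>\frac{c}{2\pi}$; $\mathbb{Z}_1=\mathbb{Z}\setminus\{0,n_1,n_2\}$; $|k|=|k_1|+|k_2|$. $\omega_1(\xi)=\varepsilon^{-4}n_1^2+\frac{1}{4\pi}(n_1+n_2)c+\frac1{4\pi}(n_1-n_2)\xi_1$, $\omega_2(\xi)=\varepsilon^{-4}n_2^2+\frac{1}{4\pi}(n_1+n_2)c+\frac1{4\pi}(n_2-n_1)\xi_2$, $\Omega_j(\xi)=\varepsilon^{-4}j^2+\frac{1}{4\pi}(cj+n_1\xi_1+n_2\xi_2)$ for $j\in\mathbb{Z}_1$. "meas" is Lebesgue measure on $\mathbb{R}^2$. *)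

theory Defs
  imports "HOL-Analysis.Analysis"
begin

definition Z1 :: "int \<Rightarrow> int \<Rightarrow> int set" where
  "Z1 n1 n2 = UNIV - {0, n1, n2}"

definition knorm :: "int \<times> int \<Rightarrow> real" where
  "knorm k = real_of_int (\<bar>fst k\<bar> + \<bar>snd k\<bar>)"

definition omega1 :: "int \<Rightarrow> int \<Rightarrow> real \<Rightarrow> real \<Rightarrow> real \<times> real \<Rightarrow> real" where
  "omega1 n1 n2 c eps xi = (1 / eps ^ 4) * (real_of_int n1)^2
     + (1 / (4 * pi)) * real_of_int (n1 + n2) * c
     + (1 / (4 * pi)) * real_of_int (n1 - n2) * fst xi"

definition omega2 :: "int \<Rightarrow> int \<Rightarrow> real \<Rightarrow> real \<Rightarrow> real \<times> real \<Rightarrow> real" where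
  "omega2 n1 n2 c eps xi = (1 / eps ^ 4) * (real_of_int n2)^2
     + (1 / (4 * pi)) * real_of_int (n1 + n2) * c
     + (1 / (4 * pi)) * real_of_int (n2 - n1) * snd xi"

definition Omega :: "int \<Rightarrow> int \<Rightarrow> real \<Rightarrow> real \<Rightarrow> int \<Rightarrow> real \<times> real \<Rightarrow> real" where
  "Omega n1 n2 c eps j xi = (1 / eps ^ 4) * (real_of_int j)^2
     + (1 / (4 * pi)) * (c * real_of_int j + real_of_int n1 * fst xi + real_of_int n2 * snd xi)"

definition kdot :: "int \<Rightarrow> int \<Rightarrow> real \<Rightarrow> real \<Rightarrow> int \<times> int \<Rightarrow> real \<times> real \<Rightarrow> real" where
  "kdot n1 n2 c eps k xi =
     real_of_int (fst k) * omega1 n1 n2 c eps xi + real_of_int (snd k) * omega2 n1 n2 c eps xi"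

definition O0 :: "int \<Rightarrow> int \<Rightarrow> real \<Rightarrow> real \<Rightarrow> (real \<times> real) set \<Rightarrow> real \<Rightarrow> real \<Rightarrow> (real \<times> real) set" where
  "O0 n1 n2 c eps U \<tau> \<gamma> = {xi \<in> U. \<forall>k :: int \<times> int. k \<noteq> (0, 0) \<longrightarrow>
      (let w = kdot n1 n2 c eps k xi; Om = (\<lambda>j. Omega n1 n2 c eps j xi);
           d = knorm k powr (- \<tau>) in
        \<bar>w\<bar> \<ge> \<gamma> * d
      \<and> (\<forall>j \<in> Z1 n1 n2. \<forall>s \<in> {-1, 1::real}. \<bar>w + s * Om j\<bar> \<ge> \<gamma> * (real_of_int \<bar>j\<bar>)^2 * d)
      \<and> (\<forall>i \<in> Z1 n1 n2. \<forall>j \<in> Z1 n1 n2. \<forall>s \<in> {-1, 1::real}.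
            \<bar>w + s * (Om i + Om j)\<bar> \<ge> \<gamma> * (real_of_int (\<bar>i\<bar> + \<bar>j\<bar>))^2 * d)
      \<and> (\<forall>i \<in> Z1 n1 n2. \<forall>j \<in> Z1 n1 n2. \<bar>i\<bar> \<noteq> \<bar>j\<bar> \<longrightarrow>
            \<bar>w + Om i - Om j\<bar> \<ge> \<gamma> * real_of_int ((\<bar>i\<bar> - \<bar>j\<bar>) * (\<bar>i\<bar> + \<bar>j\<bar>)) * d)
      \<and> (\<forall>j. j \<in> Z1 n1 n2 \<and> - j \<in> Z1 n1 n2 \<longrightarrow>
            \<bar>w + Om j - Om (- j)\<bar> \<ge> \<gamma> * real_of_int \<bar>j\<bar> * d))}"

end

theory Submission
  imports Defs
begin

(* Every condition defining O_0(gamma) asks a "small divisor"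
     <k, omega(xi)> + (combination of Omega_i(xi), Omega_j(xi))
   to stay away from zero.  Each such divisor is an affine function of xi, and because n1 is odd
   and n2 - n1 = 4 its gradient has a coordinate of size >= 1/(4 pi) whenever k <> 0.  Hence the
   set where one divisor is small is a strip of measure O(gamma * weight * |k|^-tau).
   Since Omega_j grows like kappa j^2 with kappa = eps^-4 - c/(4 pi) > 0, while <k, omega> = O(|k|)
   on the bounded set O, a violated condition can only involve indices of size O(|k|).  So for
   |k| = n only O(n^2) wave vectors and O(n^2) divisors matter, each of weight O(n^2): the
   resonant set of the shell |k| = n has measure O(gamma n^(6 - tau)), summable for tau > 7. *)

definition strip :: "real \<Rightarrow> real \<Rightarrow> real \<Rightarrow> real \<Rightarrow> (real \<times> real) set" where
  "strip a1 a2 b r = {p. \<bar>a1 * fst p + a2 * snd p + b\<bar> < r}"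

lemma strip_open: "open (strip a1 a2 b r)"
  unfolding strip_def by (intro open_Collect_less continuous_intros)

lemma emeasure_interval_sublevel:
  fixes a b r :: real
  assumes "a \<noteq> 0" "r \<ge> 0"
  shows "emeasure lborel {y. \<bar>a * y + b\<bar> < r} = ennreal (2 * r / \<bar>a\<bar>)"
proof (cases "a > 0")
  case True
  have "{y. \<bar>a * y + b\<bar> < r} = {(-b - r)/a <..< (r - b)/a}"
    using True by (auto simp: field_simps abs_less_iff)
  moreover have "(-b - r)/a \<le> (r - b)/a" using True assms by (simp add: divide_right_mono)
  ultimately show ?thesis using True by (simp add: diff_divide_distrib[symmetric])
next
  case False
  hence a: "a < 0" using assms by simp
  have "{y. \<bar>a * y + b\<bar> < r} = {(r - b)/a <..< (-b - r)/a}"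
    using a by (auto simp: field_simps abs_less_iff)
  moreover have "(r - b)/a \<le> (-b - r)/a" using a assms by (simp add: divide_right_mono_neg)
  ultimately show ?thesis using a by (simp add: diff_divide_distrib[symmetric])
qed

text \<open>Fubini: every vertical fibre of a strip with \<open>a2 \<noteq> 0\<close>, cut to a square of side \<open>2R\<close>,
  has length at most \<open>2r/|a2|\<close>.\<close>
lemma emeasure_strip_vertical:
  fixes a1 a2 b r R :: real
  assumes "a2 \<noteq> 0" "r \<ge> 0" "R \<ge> 0"
  shows "emeasure lborel (strip a1 a2 b r \<inter> cbox (-R, -R) (R, R)) \<le> ennreal (2 * R * (2 * r / \<bar>a2\<bar>))"
proof -
  let ?A = "strip a1 a2 b r \<inter> cbox (-R, -R) (R, R)"
  have A: "?A \<in> sets (lborel \<Otimes>\<^sub>M lborel)"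
    unfolding lborel_prod using strip_open by (intro sets.Int borel_open borel_closed) auto
  have fibre: "emeasure lborel (Pair x -` ?A) \<le> ennreal (2 * r / \<bar>a2\<bar>) * indicator {-R..R} x" for x
  proof (cases "x \<in> {-R..R}")
    case True
    have "Pair x -` ?A \<subseteq> {y. \<bar>a2 * y + (a1 * x + b)\<bar> < r}" by (auto simp: strip_def algebra_simps)
    hence "emeasure lborel (Pair x -` ?A) \<le> emeasure lborel {y. \<bar>a2 * y + (a1 * x + b)\<bar> < r}"
      by (intro emeasure_mono) (auto intro!: borel_open open_Collect_less continuous_intros)
    thus ?thesis using True emeasure_interval_sublevel[OF assms(1,2)] by simp
  next
    case False
    hence "Pair x -` ?A = {}" by (auto simp: cbox_Pair_iff)
    thus ?thesis using False by simp
  qed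
  have "emeasure lborel ?A = (\<integral>\<^sup>+x. emeasure lborel (Pair x -` ?A) \<partial>lborel)"
    using lborel.emeasure_pair_measure_alt[OF A] by (simp only: lborel_prod)
  also have "\<dots> \<le> (\<integral>\<^sup>+x. ennreal (2 * r / \<bar>a2\<bar>) * indicator {-R..R} x \<partial>lborel)"
    by (intro nn_integral_mono fibre)
  also have "\<dots> = ennreal (2 * R * (2 * r / \<bar>a2\<bar>))"
    using assms by (subst nn_integral_cmult) (auto simp flip: ennreal_mult simp: mult_ac)
  finally show ?thesis .
qed

text \<open>The reflection in the diagonal preserves planar Lebesgue measure; it reduces strips with a
  large first coefficient to the vertical case.\<close>
lemma emeasure_swap:
  fixes A :: "(real \<times> real) set"
  assumes "A \<in> sets lborel"
  shows "emeasure lborel A = emeasure lborel ((\<lambda>(x, y). (y, x)) -` A)"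
proof -
  have "(lborel :: (real \<times> real) measure) = distr lborel lborel (\<lambda>(x, y). (y, x))"
    using lborel_pair.distr_pair_swap[where 'a=real and 'b=real] by (simp only: lborel_prod)
  hence "emeasure lborel A = emeasure (distr lborel lborel (\<lambda>(x::real, y::real). (y, x))) A"
    by simp
  also have "\<dots> = emeasure lborel ((\<lambda>(x, y). (y, x)) -` A)"
    using assms measurable_pair_swap'[of lborel lborel, unfolded lborel_prod]
    by (subst emeasure_distr) auto
  finally show ?thesis .
qed

lemma measure_strip_le:
  fixes a1 a2 b r R \<alpha> :: real
  assumes Ob: "Ob \<subseteq> cbox (-R, -R) (R, R)" and R: "R \<ge> 0" and r: "r \<ge> 0"
    and grad: "\<alpha> > 0" "\<bar>a1\<bar> \<ge> \<alpha> \<or> \<bar>a2\<bar> \<ge> \<alpha>"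
  shows "measure lebesgue (Ob \<inter> strip a1 a2 b r) \<le> 4 * R * r / \<alpha>"
proof -
  let ?C = "cbox (-R, -R) (R, R)"
  have vertical: "emeasure lborel (strip a a' b r \<inter> ?C) \<le> ennreal (4 * R * r / \<alpha>)"
    if "\<alpha> \<le> \<bar>a'\<bar>" for a a'
  proof -
    have "2 * r / \<bar>a'\<bar> \<le> 2 * r / \<alpha>" using that grad r by (intro divide_left_mono) auto
    hence "2 * R * (2 * r / \<bar>a'\<bar>) \<le> 2 * R * (2 * r / \<alpha>)" using R by (intro mult_left_mono) auto
    hence "2 * R * (2 * r / \<bar>a'\<bar>) \<le> 4 * R * r / \<alpha>" by simp
    moreover have "a' \<noteq> 0" using that grad by auto
    ultimately show ?thesis
      using emeasure_strip_vertical[of a' r R a b] R r by (meson ennreal_leI order_trans)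
  qed
  have sets: "strip a1 a2 b r \<inter> ?C \<in> sets lborel"
    using strip_open by (intro sets.Int borel_open borel_closed) auto
  have "emeasure lborel (strip a1 a2 b r \<inter> ?C) \<le> ennreal (4 * R * r / \<alpha>)"
  proof (cases "\<alpha> \<le> \<bar>a2\<bar>")
    case True
    thus ?thesis by (rule vertical)
  next
    case False
    have "(\<lambda>(x, y). (y, x)) -` (strip a1 a2 b r \<inter> ?C) = strip a2 a1 b r \<inter> ?C"
      by (auto simp: strip_def cbox_Pair_iff add.commute)
    thus ?thesis using emeasure_swap[OF sets] vertical[of a1 a2] False grad(2) by simp
  qed
  moreover have "emeasure lebesgue (Ob \<inter> strip a1 a2 b r) \<le> emeasure lebesgue (strip a1 a2 b r \<inter> ?C)"
    using Ob sets by (intro emeasure_mono) (auto intro: sets_completionI_sets)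
  moreover have "emeasure lebesgue (strip a1 a2 b r \<inter> ?C) = emeasure lborel (strip a1 a2 b r \<inter> ?C)"
    using sets by (simp add: emeasure_completion)
  ultimately show ?thesis
    unfolding measure_def using R r grad by (intro enn2real_leI) (auto intro: order_trans)
qed

lemma measure_le_suminf_of_cover:
  fixes E :: "nat \<Rightarrow> 'a set" and f :: "nat \<Rightarrow> real"
  assumes cover: "A \<subseteq> (\<Union>n. E n)" and E: "\<And>n. E n \<in> fmeasurable M"
    and le: "\<And>n. measure M (E n) \<le> f n" and f: "summable f"
  shows "measure M A \<le> suminf f"
proof -
  have f0: "0 \<le> f n" for n using le[of n] measure_nonneg[of M "E n"] by linarith
  have partial: "measure M (\<Union>i\<le>n. E i) \<le> suminf f" for n
  proof -
    have "measure M (\<Union>i\<le>n. E i) \<le> (\<Sum>i\<le>n. measure M (E i))"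
      using E by (intro measure_UNION_le) auto
    also have "\<dots> \<le> (\<Sum>i\<le>n. f i)" by (intro sum_mono le)
    also have "\<dots> \<le> suminf f" using f f0 by (intro sum_le_suminf) auto
    finally show ?thesis .
  qed
  have U: "(\<Union>n. E n) \<in> fmeasurable M" "measure M (\<Union>n. E n) \<le> suminf f"
    by (rule fmeasurable_countable_Union[where S=E, OF E partial],
        rule measure_countable_Union_le[where S=E, OF E partial])
  show ?thesis
  proof (cases "A \<in> sets M")
    case True
    thus ?thesis using measure_mono_fmeasurable[OF cover True U(1)] U(2) by linarith
  next
    case False
    thus ?thesis using measure_notin_sets[OF False] U(2) measure_nonneg[of M "\<Union>n. E n"] by linarith
  qed
qed

text \<open>The five families of small divisors \<open>\<langle>k, \<omega>\<rangle> + \<dots>\<close> in the definition of \<open>\<O>_0(\<gamma>)\<close>: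
  the zeroth Melnikov condition, first Melnikov conditions \<open>\<plusminus>\<Omega>_j\<close>, second Melnikov conditions
  \<open>\<plusminus>(\<Omega>_i + \<Omega>_j)\<close> and \<open>\<Omega>_i - \<Omega>_j\<close>, and the mirror conditions \<open>\<Omega>_j - \<Omega>_{-j}\<close>.\<close>
datatype divisor =
    Zeroth
  | First int bool
  | Second_sum int int bool
  | Second_diff int int
  | Mirror int

definition pm :: "bool \<Rightarrow> int" where
  "pm b = (if b then 1 else -1)"

lemma sign_as_pm: "s \<in> {-1, 1 :: real} \<Longrightarrow> \<exists>b. s = of_int (pm b)"
  by (auto simp: pm_def)

lemma abs_pm: "\<bar>real_of_int (pm b) * x\<bar> = \<bar>x\<bar>"
  by (simp add: pm_def)

fun weight :: "divisor \<Rightarrow> real" where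
  "weight Zeroth = 1"
| "weight (First j b) = (real_of_int \<bar>j\<bar>)^2"
| "weight (Second_sum i j b) = (real_of_int (\<bar>i\<bar> + \<bar>j\<bar>))^2"
| "weight (Second_diff i j) = real_of_int ((\<bar>i\<bar> - \<bar>j\<bar>) * (\<bar>i\<bar> + \<bar>j\<bar>))"
| "weight (Mirror j) = real_of_int \<bar>j\<bar>"

text \<open>The total multiplicity of \<open>\<Omega>\<close> in a divisor; only this part of \<open>\<Omega>\<close> depends on \<open>\<xi>\<close>, since
  the \<open>\<xi>\<close>-dependence of \<open>\<Omega>_j\<close> does not depend on \<open>j\<close>.\<close>
fun Omega_coeff :: "divisor \<Rightarrow> int" where
  "Omega_coeff Zeroth = 0"
| "Omega_coeff (First j b) = pm b"
| "Omega_coeff (Second_sum i j b) = 2 * pm b"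
| "Omega_coeff (Second_diff i j) = 0"
| "Omega_coeff (Mirror j) = 0"

fun height :: "divisor \<Rightarrow> int" where
  "height Zeroth = 0"
| "height (First j b) = \<bar>j\<bar>"
| "height (Second_sum i j b) = max \<bar>i\<bar> \<bar>j\<bar>"
| "height (Second_diff i j) = max \<bar>i\<bar> \<bar>j\<bar>"
| "height (Mirror j) = \<bar>j\<bar>"

lemma divisors_upto_subset:
  assumes "0 \<le> L"
  shows "{d. height d \<le> L} \<subseteq>
    (\<Union>(i, j, b) \<in> {-L..L} \<times> {-L..L} \<times> UNIV. {Zeroth, First j b, Second_sum i j b, Second_diff i j, Mirror j})"
proof
  fix d assume "d \<in> {d. height d \<le> L}"
  thus "d \<in> (\<Union>(i, j, b) \<in> {-L..L} \<times> {-L..L} \<times> UNIV. {Zeroth, First j b, Second_sum i j b, Second_diff i j, Mirror j})"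
    using assms by (cases d) (force simp: abs_le_iff)+
qed

lemma card_divisors_upto:
  assumes "0 \<le> L"
  shows "finite {d. height d \<le> L}" "card {d. height d \<le> L} \<le> 10 * nat (2 * L + 1) ^ 2"
proof -
  let ?P = "{-L..L} \<times> {-L..L} \<times> (UNIV :: bool set)"
  let ?D = "\<lambda>(i, j, b). {Zeroth, First j b, Second_sum i j b, Second_diff i j, Mirror j}"
  have fin: "finite (\<Union> (?D ` ?P))" by auto
  thus "finite {d. height d \<le> L}" using divisors_upto_subset[OF assms] by (rule finite_subset[rotated])
  have "card {d. height d \<le> L} \<le> card (\<Union> (?D ` ?P))"
    using divisors_upto_subset[OF assms] fin by (rule card_mono[rotated])
  also have "\<dots> \<le> (\<Sum>p\<in>?P. card (?D p))" by (rule card_UN_le) auto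
  also have "\<dots> \<le> (\<Sum>p\<in>?P. 5)"
  proof (intro sum_mono)
    fix p :: "int \<times> int \<times> bool"
    obtain i j b where "p = (i, j, b)" by (rule prod_cases3)
    thus "card (?D p) \<le> 5"
      using card_length[of "[Zeroth, First j b, Second_sum i j b, Second_diff i j, Mirror j]"] by simp
  qed
  also have "\<dots> = 10 * nat (2 * L + 1) ^ 2" using assms by (simp add: card_cartesian_product power2_eq_square)
  finally show "card {d. height d \<le> L} \<le> 10 * nat (2 * L + 1) ^ 2" .
qed

lemma weight_le:
  assumes "height d \<le> L" "1 \<le> L"
  shows "weight d \<le> 4 * (real_of_int L)^2"
proof -
  have sq: "(real_of_int x)^2 \<le> (real_of_int L)^2" if "\<bar>x\<bar> \<le> L" for x
    using that assms(2) by (simp add: abs_le_square_iff[symmetric])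
  have L: "1 \<le> real_of_int L" "real_of_int L \<le> (real_of_int L)^2"
    using assms(2) by (simp_all add: power2_eq_square)
  show ?thesis
  proof (cases d)
    case Zeroth
    show ?thesis unfolding Zeroth weight.simps using L by linarith
  next
    case (First j b)
    have "(real_of_int j)^2 \<le> (real_of_int L)^2" using First assms(1) by (intro sq) simp
    thus ?thesis unfolding First weight.simps of_int_abs power2_abs
      using zero_le_power2[of "real_of_int L"] by linarith
  next
    case (Second_sum i j b)
    have "(real_of_int (\<bar>i\<bar> + \<bar>j\<bar>))^2 \<le> (2 * real_of_int L)^2"
      using Second_sum assms(1) by (intro power_mono) auto
    thus ?thesis using Second_sum by (simp add: power_mult_distrib)
  next
    case (Second_diff i j)
    have "weight d = (real_of_int i)^2 - (real_of_int j)^2"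
      using Second_diff by (simp add: power2_eq_square algebra_simps)
    moreover have "(real_of_int i)^2 \<le> (real_of_int L)^2" using Second_diff assms(1) by (intro sq) simp
    ultimately show ?thesis using zero_le_power2[of "real_of_int j"] zero_le_power2[of "real_of_int L"]
      by linarith
  next
    case (Mirror j)
    have "real_of_int \<bar>j\<bar> \<le> real_of_int L" using Mirror assms(1) by simp
    thus ?thesis unfolding Mirror weight.simps using L by linarith
  qed
qed

lemma abs_le_square_int: "\<bar>j\<bar> \<le> (j::int)^2"
proof (cases "j = 0")
  case False
  hence "\<bar>j\<bar> * 1 \<le> \<bar>j\<bar> * \<bar>j\<bar>" by (intro mult_left_mono) auto
  thus ?thesis by (simp add: power2_eq_square abs_mult[symmetric])
qed simp

lemma abs_sum_le_diff_squares:
  fixes i j :: int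
  assumes "\<bar>j\<bar> < \<bar>i\<bar>"
  shows "\<bar>i\<bar> + \<bar>j\<bar> \<le> i^2 - j^2"
proof -
  have "1 * (\<bar>i\<bar> + \<bar>j\<bar>) \<le> (\<bar>i\<bar> - \<bar>j\<bar>) * (\<bar>i\<bar> + \<bar>j\<bar>)" using assms by (intro mult_right_mono) auto
  also have "\<dots> = i^2 - j^2" by (simp add: power2_eq_square algebra_simps)
  finally show ?thesis by simp
qed

lemma damped_le:
  fixes W \<gamma> \<gamma>' \<delta> :: real
  assumes "0 \<le> W" "0 \<le> \<gamma>" "\<gamma> \<le> \<gamma>'" "0 \<le> \<delta>" "\<delta> \<le> 1"
  shows "\<gamma> * W * \<delta> \<le> \<gamma>' * W"
proof -
  have "\<gamma> * W * \<delta> \<le> \<gamma> * W" using assms by (simp add: mult_left_le)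
  also have "\<dots> \<le> \<gamma>' * W" using assms by (simp add: mult_right_mono)
  finally show ?thesis .
qed

text \<open>The mechanism behind all index bounds: if \<open>|X| \<ge> \<kappa> A\<close> while \<open>w + X\<close> is smaller than \<open>\<kappa> A / 2\<close>,
  then \<open>A\<close> is controlled by \<open>|w|\<close>.\<close>
lemma small_divisor_forces_bound:
  fixes \<kappa> A X w N :: real
  assumes "0 < \<kappa>" "\<kappa> * A \<le> \<bar>X\<bar>" "\<bar>w + X\<bar> < \<kappa> / 2 * A" "\<bar>w\<bar> \<le> N"
  shows "A \<le> 2 * N / \<kappa>"
proof -
  have "\<kappa> * A < \<kappa> / 2 * A + N" using assms(2-4) by linarith
  hence "\<kappa> * A < 2 * N" by simp
  thus ?thesis using assms(1) by (simp add: pos_le_divide_eq mult.commute)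
qed

lemma lattice_sphere_subset:
  "{k :: int \<times> int. knorm k = real n} \<subseteq> {- int n..int n} \<times> {- int n..int n}"
  by (auto simp: knorm_def)

lemma finite_lattice_sphere: "finite {k :: int \<times> int. knorm k = real n}"
  by (rule finite_subset[OF lattice_sphere_subset]) auto

lemma card_lattice_sphere:
  assumes "1 \<le> n"
  shows "real (card {k :: int \<times> int. knorm k = real n}) \<le> 9 * (real n)^2"
proof -
  have "card {k :: int \<times> int. knorm k = real n} \<le> card ({- int n..int n} \<times> {- int n..int n})"
    by (intro card_mono lattice_sphere_subset) auto
  also have "\<dots> = (2 * n + 1)^2"
  proof -
    have "card {- int n..int n} = 2 * n + 1" by simp
    thus ?thesis by (simp add: card_cartesian_product power2_eq_square)
  qed
  finally have "real (card {k :: int \<times> int. knorm k = real n}) \<le> real ((2 * n + 1)^2)"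
    by (rule of_nat_mono)
  also have "\<dots> = (2 * real n + 1)^2" by simp
  also have "\<dots> \<le> (3 * real n)^2" using assms by (intro power_mono) auto
  finally show "real (card {k :: int \<times> int. knorm k = real n}) \<le> 9 * (real n)^2" by (simp add: power_mult_distrib)
qed

lemma card_shell_index:
  assumes L: "1 \<le> L" and n: "1 \<le> n"
  shows "real (card ({k. knorm k = real n} \<times> {d. height d \<le> L})) \<le> 9 * (real n)^2 * (90 * (real_of_int L)^2)"
proof -
  have "real (card {d. height d \<le> L}) \<le> real (10 * nat (2 * L + 1) ^ 2)"
    using card_divisors_upto(2)[of L] L by (intro of_nat_mono) auto
  also have "\<dots> = 10 * (2 * real_of_int L + 1)^2" using L by simp
  also have "\<dots> \<le> 10 * (3 * real_of_int L)^2" using L by (intro mult_left_mono power_mono) auto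
  finally have "real (card {d. height d \<le> L}) \<le> 90 * (real_of_int L)^2" by simp
  hence "real (card {k. knorm k = real n}) * real (card {d. height d \<le> L}) \<le> 9 * (real n)^2 * (90 * (real_of_int L)^2)"
    using card_lattice_sphere[OF n] by (intro mult_mono) auto
  thus ?thesis by (simp add: card_cartesian_product)
qed

lemma knorm_nat: "knorm k = real (nat (\<bar>fst k\<bar> + \<bar>snd k\<bar>))"
  unfolding knorm_def by simp

lemma knorm_ge_1: "k \<noteq> (0, 0) \<Longrightarrow> 1 \<le> knorm k"
  unfolding knorm_def by (cases k) auto

lemma knorm_powr_le_1:
  assumes "k \<noteq> (0, 0)" "0 \<le> \<tau>"
  shows "knorm k powr (- \<tau>) \<le> 1"
  using knorm_ge_1[OF assms(1)] assms(2) by (simp add: powr_minus inverse_le_1_iff ge_one_powr_ge_zero)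

lemma bounded_positive_subset_box:
  fixes S :: "(real \<times> real) set"
  assumes "bounded S" "S \<subseteq> {\<xi>. 0 < fst \<xi> \<and> 0 < snd \<xi>}"
  obtains R where "0 < R" "S \<subseteq> cbox (0, 0) (R, R)"
proof -
  obtain R where R: "0 < R" "\<And>\<xi>. \<xi> \<in> S \<Longrightarrow> norm \<xi> \<le> R" using assms(1) bounded_pos by metis
  have "S \<subseteq> cbox (0, 0) (R, R)"
  proof
    fix \<xi> assume \<xi>: "\<xi> \<in> S"
    have "\<bar>fst \<xi>\<bar> \<le> norm \<xi>" "\<bar>snd \<xi>\<bar> \<le> norm \<xi>"
      using norm_fst_le[of "fst \<xi>" "snd \<xi>"] norm_snd_le[of "snd \<xi>" "fst \<xi>"] by simp_all
    moreover have "0 < fst \<xi>" "0 < snd \<xi>" "norm \<xi> \<le> R" using \<xi> R(2) assms(2) by auto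
    ultimately show "\<xi> \<in> cbox (0, 0) (R, R)" by (cases \<xi>) (simp add: cbox_Pair_iff)
  qed
  thus ?thesis using R(1) that by blast
qed

locale two_mode_model =
  fixes n1 n2 :: int and c eps :: real
  assumes n1_pos: "0 < n1" and n1_odd: "odd n1" and gap: "n2 - n1 = 4"
    and c_pos: "0 < c" and eps_large: "c / (2 * pi) < 1 / eps ^ 4"
begin

text \<open>The rate \<open>\<kappa> = \<epsilon>\<^sup>-\<^sup>4 - c/(4\<pi>) > 0\<close> of quadratic growth of the normal frequencies.\<close>
definition kappa :: real where
  "kappa = 1 / eps ^ 4 - c / (4 * pi)"

lemma kappa_pos: "0 < kappa"
proof -
  have "c / (4 * pi) < c / (2 * pi)" using c_pos by (intro divide_strict_left_mono) auto
  thus ?thesis unfolding kappa_def using eps_large by linarith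
qed

lemma Omega_lower:
  assumes "0 \<le> fst \<xi>" "0 \<le> snd \<xi>"
  shows "kappa * (real_of_int j)^2 \<le> Omega n1 n2 c eps j \<xi>"
proof -
  have "- j \<le> j^2" using abs_le_square_int[of j] by linarith
  hence "0 \<le> c * (real_of_int j + (real_of_int j)^2)" using c_pos
    by (intro mult_nonneg_nonneg) (auto simp flip: of_int_power of_int_add)
  moreover have "0 \<le> real_of_int n1 * fst \<xi> + real_of_int n2 * snd \<xi>"
    using assms n1_pos gap by simp
  ultimately have "0 \<le> (c * (real_of_int j + (real_of_int j)^2) + real_of_int n1 * fst \<xi> + real_of_int n2 * snd \<xi>) / (4 * pi)"
    by simp
  also have "\<dots> = Omega n1 n2 c eps j \<xi> - kappa * (real_of_int j)^2"
    unfolding Omega_def kappa_def by (simp add: field_simps)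
  finally show ?thesis by simp
qed

lemma Omega_diff_lower:
  assumes "\<bar>j\<bar> < \<bar>i\<bar>"
  shows "kappa * ((real_of_int i)^2 - (real_of_int j)^2) \<le> Omega n1 n2 c eps i \<xi> - Omega n1 n2 c eps j \<xi>"
proof -
  have "j - i \<le> \<bar>i\<bar> + \<bar>j\<bar>" by arith
  hence "j - i \<le> i^2 - j^2" using abs_sum_le_diff_squares[OF assms] by (rule order_trans)
  hence "0 \<le> c * ((real_of_int i - real_of_int j) + ((real_of_int i)^2 - (real_of_int j)^2))" using c_pos
    by (intro mult_nonneg_nonneg) (auto simp flip: of_int_power of_int_add of_int_diff)
  hence "0 \<le> c * ((real_of_int i - real_of_int j) + ((real_of_int i)^2 - (real_of_int j)^2)) / (4 * pi)"
    by simp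
  also have "\<dots> = Omega n1 n2 c eps i \<xi> - Omega n1 n2 c eps j \<xi> - kappa * ((real_of_int i)^2 - (real_of_int j)^2)"
    unfolding Omega_def kappa_def by (simp add: algebra_simps add_divide_distrib diff_divide_distrib)
  finally show ?thesis by simp
qed

lemma Omega_mirror: "Omega n1 n2 c eps j \<xi> - Omega n1 n2 c eps (- j) \<xi> = c * real_of_int j / (2 * pi)"
  unfolding Omega_def by (simp add: field_simps)

fun resonance :: "int \<times> int \<Rightarrow> divisor \<Rightarrow> real \<times> real \<Rightarrow> real" where
  "resonance k Zeroth \<xi> = kdot n1 n2 c eps k \<xi>"
| "resonance k (First j b) \<xi> = kdot n1 n2 c eps k \<xi> + of_int (pm b) * Omega n1 n2 c eps j \<xi>"
| "resonance k (Second_sum i j b) \<xi> =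
     kdot n1 n2 c eps k \<xi> + of_int (pm b) * (Omega n1 n2 c eps i \<xi> + Omega n1 n2 c eps j \<xi>)"
| "resonance k (Second_diff i j) \<xi> = kdot n1 n2 c eps k \<xi> + Omega n1 n2 c eps i \<xi> - Omega n1 n2 c eps j \<xi>"
| "resonance k (Mirror j) \<xi> = kdot n1 n2 c eps k \<xi> + Omega n1 n2 c eps j \<xi> - Omega n1 n2 c eps (- j) \<xi>"

text \<open>Here the gap
  \<open>n2 - n1 = 4\<close> is used: \<open>\<omega>1, \<omega>2\<close> have slopes \<open>\<mp>1/\<pi>\<close>.\<close>
definition grad1 :: "int \<times> int \<Rightarrow> divisor \<Rightarrow> int" where
  "grad1 k d = Omega_coeff d * n1 - 4 * fst k"

definition grad2 :: "int \<times> int \<Rightarrow> divisor \<Rightarrow> int" where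
  "grad2 k d = Omega_coeff d * n2 + 4 * snd k"

lemma resonance_affine:
  "resonance k d \<xi> = real_of_int (grad1 k d) / (4 * pi) * fst \<xi> + real_of_int (grad2 k d) / (4 * pi) * snd \<xi>
     + resonance k d (0, 0)"
proof -
  have n2: "real_of_int n2 = real_of_int n1 + 4" using gap by linarith
  show ?thesis
    by (cases d) (simp_all add: grad1_def grad2_def kdot_def omega1_def omega2_def Omega_def n2 field_simps)
qed

text \<open>For one \<open>\<Omega>\<close> this uses that \<open>n1\<close> is
  odd, for two that \<open>2 n1 \<noteq> 0 (mod 4)\<close>.\<close>
lemma grad_nonzero:
  assumes "k \<noteq> (0, 0)"
  shows "grad1 k d \<noteq> 0 \<or> grad2 k d \<noteq> 0"
  using assms n1_odd by (cases d; cases k) (auto simp: grad1_def grad2_def pm_def; presburger)+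

lemma resonance_sublevel_eq:
  "{\<xi> \<in> Ob. \<bar>resonance k d \<xi>\<bar> < r} =
     Ob \<inter> strip (real_of_int (grad1 k d) / (4 * pi)) (real_of_int (grad2 k d) / (4 * pi)) (resonance k d (0, 0)) r"
  by (subst resonance_affine) (auto simp: strip_def)

lemma sets_resonance_sublevel:
  assumes "Ob \<in> sets lebesgue"
  shows "{\<xi> \<in> Ob. \<bar>resonance k d \<xi>\<bar> < r} \<in> sets lebesgue"
  unfolding resonance_sublevel_eq
  using assms by (intro sets.Int) (auto intro!: sets_completionI_sets borel_open strip_open)

lemma measure_resonance_sublevel:
  assumes "k \<noteq> (0, 0)" "Ob \<subseteq> cbox (-R, -R) (R, R)" "0 \<le> R"
  shows "measure lebesgue {\<xi> \<in> Ob. \<bar>resonance k d \<xi>\<bar> < r} \<le> 16 * pi * R * max r 0"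
proof (cases "0 \<le> r")
  case True
  have "1 \<le> \<bar>grad1 k d\<bar> \<or> 1 \<le> \<bar>grad2 k d\<bar>"
    using grad_nonzero[OF assms(1), of d] by linarith
  hence "1 \<le> \<bar>real_of_int (grad1 k d)\<bar> \<or> 1 \<le> \<bar>real_of_int (grad2 k d)\<bar>"
    by (metis of_int_1_le_iff of_int_abs)
  hence "1 / (4 * pi) \<le> \<bar>real_of_int (grad1 k d) / (4 * pi)\<bar> \<or> 1 / (4 * pi) \<le> \<bar>real_of_int (grad2 k d) / (4 * pi)\<bar>"
    by (auto simp: abs_divide divide_right_mono)
  hence "measure lebesgue {\<xi> \<in> Ob. \<bar>resonance k d \<xi>\<bar> < r} \<le> 4 * R * r / (1 / (4 * pi))"
    unfolding resonance_sublevel_eq using assms(2,3) True by (intro measure_strip_le) auto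
  thus ?thesis using True by (simp add: mult_ac)
next
  case False
  hence "{\<xi> \<in> Ob. \<bar>resonance k d \<xi>\<bar> < r} = {}" by auto
  thus ?thesis using False by (simp del: Collect_empty_eq)
qed

lemma resonant_divisor_exists:
  assumes "\<xi> \<in> Ob" "\<xi> \<notin> O0 n1 n2 c eps Ob \<tau> \<gamma>"
  shows "\<exists>k d. k \<noteq> (0, 0) \<and> \<bar>resonance k d \<xi>\<bar> < \<gamma> * weight d * knorm k powr (-\<tau>)"
proof (rule ccontr)
  assume "\<not> ?thesis"
  hence nr: "\<gamma> * weight d * knorm k powr (-\<tau>) \<le> \<bar>resonance k d \<xi>\<bar>" if "k \<noteq> (0, 0)" for k d
    using that by (meson not_less)
  have "\<xi> \<in> O0 n1 n2 c eps Ob \<tau> \<gamma>"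
    unfolding O0_def Let_def
  proof (intro CollectI conjI allI impI ballI)
    show "\<xi> \<in> Ob" by fact
  next
    fix k :: "int \<times> int" assume k: "k \<noteq> (0, 0)"
    show "\<gamma> * knorm k powr - \<tau> \<le> \<bar>kdot n1 n2 c eps k \<xi>\<bar>"
      using nr[OF k, of Zeroth] by simp
    fix j :: int and s :: real assume "s \<in> {-1, 1}"
    then obtain b where "s = of_int (pm b)" using sign_as_pm by blast
    thus "\<gamma> * (real_of_int \<bar>j\<bar>)\<^sup>2 * knorm k powr - \<tau> \<le> \<bar>kdot n1 n2 c eps k \<xi> + s * Omega n1 n2 c eps j \<xi>\<bar>"
      using nr[OF k, of "First j b"] by simp
  next
    fix k :: "int \<times> int" and i j :: int and s :: real assume k: "k \<noteq> (0, 0)" and "s \<in> {-1, 1}"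
    then obtain b where "s = of_int (pm b)" using sign_as_pm by blast
    thus "\<gamma> * (real_of_int (\<bar>i\<bar> + \<bar>j\<bar>))\<^sup>2 * knorm k powr - \<tau>
        \<le> \<bar>kdot n1 n2 c eps k \<xi> + s * (Omega n1 n2 c eps i \<xi> + Omega n1 n2 c eps j \<xi>)\<bar>"
      using nr[OF k, of "Second_sum i j b"] by simp
  next
    fix k :: "int \<times> int" and i j :: int assume k: "k \<noteq> (0, 0)"
    show "\<gamma> * real_of_int ((\<bar>i\<bar> - \<bar>j\<bar>) * (\<bar>i\<bar> + \<bar>j\<bar>)) * knorm k powr - \<tau>
        \<le> \<bar>kdot n1 n2 c eps k \<xi> + Omega n1 n2 c eps i \<xi> - Omega n1 n2 c eps j \<xi>\<bar>"
      using nr[OF k, of "Second_diff i j"] by simp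
  next
    fix k :: "int \<times> int" and j :: int assume k: "k \<noteq> (0, 0)"
    show "\<gamma> * real_of_int \<bar>j\<bar> * knorm k powr - \<tau>
        \<le> \<bar>kdot n1 n2 c eps k \<xi> + Omega n1 n2 c eps j \<xi> - Omega n1 n2 c eps (- j) \<xi>\<bar>"
      using nr[OF k, of "Mirror j"] by simp
  qed
  thus False using assms(2) by contradiction
qed

text \<open>The two families in which the size of the divisor is not controlled by the lower bound
  on \<open>\<Omega>\<close> alone: differences of \<open>\<Omega>\<close>'s, and the mirror divisors \<open>\<Omega>_j - \<Omega>_{-j}\<close>.\<close>
lemma height_bound_second_diff:
  assumes freq: "\<bar>kdot n1 n2 c eps k \<xi>\<bar> \<le> N"
    and \<gamma>: "0 \<le> \<gamma>" "\<gamma> \<le> kappa / 4" and \<delta>: "0 \<le> \<delta>" "\<delta> \<le> 1"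
    and res: "\<bar>resonance k (Second_diff i j) \<xi>\<bar> < \<gamma> * weight (Second_diff i j) * \<delta>"
  shows "real_of_int (max \<bar>i\<bar> \<bar>j\<bar>) \<le> 2 * N / kappa"
proof -
  let ?A = "(real_of_int i)^2 - (real_of_int j)^2"
  have weight: "weight (Second_diff i j) = ?A" by (simp add: power2_eq_square algebra_simps)
  have ij: "\<bar>j\<bar> < \<bar>i\<bar>"
  proof (rule ccontr)
    assume "\<not> \<bar>j\<bar> < \<bar>i\<bar>"
    hence "weight (Second_diff i j) \<le> 0" by (simp add: mult_nonpos_nonneg)
    hence "\<gamma> * weight (Second_diff i j) * \<delta> \<le> 0" using \<gamma>(1) \<delta>(1) by (simp add: mult_nonpos_nonneg mult_nonneg_nonpos)
    thus False using res by linarith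
  qed
  have A: "real_of_int (\<bar>i\<bar> + \<bar>j\<bar>) \<le> ?A"
    using abs_sum_le_diff_squares[OF ij] by (metis of_int_diff of_int_le_iff of_int_power)
  hence A0: "0 \<le> ?A" by simp
  have "\<gamma> * weight (Second_diff i j) * \<delta> \<le> kappa / 4 * ?A" unfolding weight using \<gamma> \<delta> A0 by (intro damped_le)
  also have "\<dots> \<le> kappa / 2 * ?A" using A0 kappa_pos by (intro mult_right_mono) auto
  finally have "\<gamma> * weight (Second_diff i j) * \<delta> \<le> kappa / 2 * ?A" .
  moreover have "kappa * ?A \<le> \<bar>Omega n1 n2 c eps i \<xi> - Omega n1 n2 c eps j \<xi>\<bar>"
    using Omega_diff_lower[OF ij, of \<xi>] by linarith
  ultimately have "?A \<le> 2 * N / kappa"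
    using res kappa_pos freq by (intro small_divisor_forces_bound) (auto simp: add_diff_eq)
  thus ?thesis using A by simp
qed

lemma height_bound_mirror:
  assumes freq: "\<bar>kdot n1 n2 c eps k \<xi>\<bar> \<le> N"
    and \<gamma>: "0 \<le> \<gamma>" "\<gamma> \<le> c / (4 * pi)" and \<delta>: "0 \<le> \<delta>" "\<delta> \<le> 1"
    and res: "\<bar>resonance k (Mirror j) \<xi>\<bar> < \<gamma> * weight (Mirror j) * \<delta>"
  shows "\<bar>real_of_int j\<bar> \<le> 4 * pi * N / c"
proof -
  have "\<gamma> * weight (Mirror j) * \<delta> \<le> c / (2 * pi) / 2 * \<bar>real_of_int j\<bar>"
    using damped_le[of "\<bar>real_of_int j\<bar>" \<gamma> "c / (4 * pi)"] \<gamma> \<delta> by simp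
  moreover have "c / (2 * pi) * \<bar>real_of_int j\<bar> \<le> \<bar>Omega n1 n2 c eps j \<xi> - Omega n1 n2 c eps (- j) \<xi>\<bar>"
    using c_pos by (simp add: Omega_mirror abs_mult)
  ultimately have "\<bar>real_of_int j\<bar> \<le> 2 * N / (c / (2 * pi))"
    using res c_pos freq by (intro small_divisor_forces_bound) (auto simp: add_diff_eq)
  thus ?thesis by (simp add: mult_ac)
qed

text \<open>A priori bound on the indices of a violated divisor: since \<open>\<Omega>_j\<close> grows like \<open>j\<^sup>2\<close> while
  \<open>\<langle>k, \<omega>\<rangle>\<close> stays below \<open>N\<close>, only indices of size \<open>O(N)\<close> can make a divisor small.\<close>
lemma height_bound_of_resonance:
  assumes pos: "0 \<le> fst \<xi>" "0 \<le> snd \<xi>" and freq: "\<bar>kdot n1 n2 c eps k \<xi>\<bar> \<le> N"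
    and \<gamma>: "0 \<le> \<gamma>" "\<gamma> \<le> kappa / 4" "\<gamma> \<le> c / (4 * pi)" and \<delta>: "0 \<le> \<delta>" "\<delta> \<le> 1"
    and res: "\<bar>resonance k d \<xi>\<bar> < \<gamma> * weight d * \<delta>"
  shows "real_of_int (height d) \<le> max (2 * N / kappa) (4 * pi * N / c)"
proof -
  let ?Om = "\<lambda>j. Omega n1 n2 c eps j \<xi>"
  have Q: "0 \<le> 2 * N / kappa" using freq kappa_pos by simp
  have sq: "\<bar>real_of_int x\<bar> \<le> (real_of_int x)^2" for x
    using abs_le_square_int[of x] by (metis of_int_abs of_int_le_iff of_int_power)
  show ?thesis
  proof (cases d)
    case Zeroth
    thus ?thesis using Q by simp
  next
    case (First j b)
    have "\<gamma> * weight d * \<delta> \<le> kappa / 2 * (real_of_int j)^2"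
      using First \<gamma> \<delta> kappa_pos damped_le[of "(real_of_int j)^2" \<gamma> "kappa / 2"] by simp
    moreover have "kappa * (real_of_int j)^2 \<le> \<bar>of_int (pm b) * ?Om j\<bar>"
      unfolding abs_pm using Omega_lower[OF pos, of j] by linarith
    ultimately have "(real_of_int j)^2 \<le> 2 * N / kappa"
      using res First kappa_pos freq by (intro small_divisor_forces_bound) auto
    thus ?thesis using First sq[of j] by simp
  next
    case (Second_sum i j b)
    let ?A = "(real_of_int i)^2 + (real_of_int j)^2"
    have "(real_of_int (\<bar>i\<bar> + \<bar>j\<bar>))^2 \<le> 2 * ?A"
      using zero_le_power2[of "\<bar>real_of_int i\<bar> - \<bar>real_of_int j\<bar>"] by (simp add: power2_eq_square algebra_simps)
    hence "kappa / 4 * (real_of_int (\<bar>i\<bar> + \<bar>j\<bar>))^2 \<le> kappa / 4 * (2 * ?A)"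
      using kappa_pos by (intro mult_left_mono) auto
    moreover have "\<gamma> * weight d * \<delta> \<le> kappa / 4 * (real_of_int (\<bar>i\<bar> + \<bar>j\<bar>))^2"
      unfolding Second_sum weight.simps using \<gamma> \<delta> by (intro damped_le) auto
    ultimately have "\<gamma> * weight d * \<delta> \<le> kappa / 2 * ?A" by linarith
    moreover have "kappa * ?A \<le> \<bar>of_int (pm b) * (?Om i + ?Om j)\<bar>"
      unfolding abs_pm distrib_left[of kappa]
      using Omega_lower[OF pos, of i] Omega_lower[OF pos, of j] abs_ge_self[of "?Om i + ?Om j"] by linarith
    ultimately have "?A \<le> 2 * N / kappa"
      using res Second_sum kappa_pos freq by (intro small_divisor_forces_bound) auto
    thus ?thesis using Second_sum sq[of i] sq[of j] by simp
  next
    case (Second_diff i j)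
    thus ?thesis using height_bound_second_diff[OF freq \<gamma>(1,2) \<delta>] res by (simp add: le_max_iff_disj)
  next
    case (Mirror j)
    thus ?thesis using height_bound_mirror[OF freq \<gamma>(1,3) \<delta>] res by (simp add: le_max_iff_disj)
  qed
qed

definition freq_max :: "real \<Rightarrow> real" where
  "freq_max R = ((real_of_int n1)^2 + (real_of_int n2)^2) / eps ^ 4 + real_of_int (n1 + n2) * c / (4 * pi) + R / pi"

lemma freq_bound:
  assumes "\<xi> \<in> cbox (0, 0) (R, R)"
  shows "\<bar>kdot n1 n2 c eps k \<xi>\<bar> \<le> knorm k * freq_max R"
proof -
  have \<xi>: "0 \<le> fst \<xi>" "fst \<xi> \<le> R" "0 \<le> snd \<xi>" "snd \<xi> \<le> R"
    using assms cbox_Pair_iff[of "fst \<xi>" "snd \<xi>"] by auto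
  have d: "real_of_int (n1 - n2) = -4" "real_of_int (n2 - n1) = 4" using gap by simp_all
  have e: "0 \<le> 1 / eps ^ 4" using eps_large c_pos by simp
  have sq: "0 \<le> (real_of_int n1)^2 / eps ^ 4" "0 \<le> (real_of_int n2)^2 / eps ^ 4"
    using e by (simp_all add: divide_nonneg_nonneg)
  have C: "0 \<le> real_of_int (n1 + n2) * c / (4 * pi)" using n1_pos gap c_pos by simp
  have o1: "omega1 n1 n2 c eps \<xi> = (real_of_int n1)^2 / eps ^ 4 + real_of_int (n1 + n2) * c / (4 * pi) - fst \<xi> / pi"
    and o2: "omega2 n1 n2 c eps \<xi> = (real_of_int n2)^2 / eps ^ 4 + real_of_int (n1 + n2) * c / (4 * pi) + snd \<xi> / pi"
    unfolding omega1_def omega2_def d by simp_all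
  have F: "freq_max R = (real_of_int n1)^2 / eps ^ 4 + (real_of_int n2)^2 / eps ^ 4 + real_of_int (n1 + n2) * c / (4 * pi) + R / pi"
    unfolding freq_max_def by (simp add: add_divide_distrib)
  have "0 \<le> fst \<xi> / pi" "fst \<xi> / pi \<le> R / pi" "0 \<le> snd \<xi> / pi" "snd \<xi> / pi \<le> R / pi"
    using \<xi> by (simp_all add: divide_right_mono)
  hence "\<bar>omega1 n1 n2 c eps \<xi>\<bar> \<le> freq_max R" "\<bar>omega2 n1 n2 c eps \<xi>\<bar> \<le> freq_max R"
    unfolding o1 o2 F abs_le_iff using sq C by (intro conjI; linarith)+
  hence "\<bar>kdot n1 n2 c eps k \<xi>\<bar> \<le> \<bar>real_of_int (fst k)\<bar> * freq_max R + \<bar>real_of_int (snd k)\<bar> * freq_max R"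
    unfolding kdot_def by (intro order_trans[OF abs_triangle_ineq] add_mono) (auto simp: abs_mult mult_left_mono)
  thus ?thesis unfolding knorm_def by (simp add: algebra_simps)
qed

definition bad_set :: "(real \<times> real) set \<Rightarrow> real \<Rightarrow> real \<Rightarrow> int \<times> int \<Rightarrow> divisor \<Rightarrow> (real \<times> real) set" where
  "bad_set Ob \<tau> \<gamma> k d = {\<xi> \<in> Ob. \<bar>resonance k d \<xi>\<bar> < \<gamma> * weight d * knorm k powr (- \<tau>)}"

definition shell :: "(real \<times> real) set \<Rightarrow> real \<Rightarrow> real \<Rightarrow> int \<Rightarrow> nat \<Rightarrow> (real \<times> real) set" where
  "shell Ob \<tau> \<gamma> M n = (\<Union>(k, d) \<in> {k. knorm k = real n} \<times> {d. height d \<le> M * int n}. bad_set Ob \<tau> \<gamma> k d)"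

text \<open>Covering the resonant parameters: for small \<open>\<gamma>\<close> a violated condition has \<open>k \<noteq> 0\<close> and, by the
  index bound, height at most \<open>M |k|\<close>.\<close>
lemma nonresonant_cover:
  assumes Ob: "Ob \<subseteq> cbox (0, 0) (R, R)" and \<tau>: "0 \<le> \<tau>"
    and \<gamma>: "0 \<le> \<gamma>" "\<gamma> \<le> kappa / 4" "\<gamma> \<le> c / (4 * pi)"
    and M: "max (2 * freq_max R / kappa) (4 * pi * freq_max R / c) \<le> real_of_int M"
  shows "Ob - O0 n1 n2 c eps Ob \<tau> \<gamma> \<subseteq> (\<Union>n. shell Ob \<tau> \<gamma> M (Suc n))"
proof
  fix \<xi> assume \<xi>: "\<xi> \<in> Ob - O0 n1 n2 c eps Ob \<tau> \<gamma>"
  then obtain k d where k: "k \<noteq> (0, 0)" and res: "\<bar>resonance k d \<xi>\<bar> < \<gamma> * weight d * knorm k powr (- \<tau>)"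
    using resonant_divisor_exists by blast
  define n where "n = nat (\<bar>fst k\<bar> + \<bar>snd k\<bar>)"
  have n: "knorm k = real n" "1 \<le> n" using knorm_nat knorm_ge_1[OF k] unfolding n_def by auto
  have \<xi>_box: "\<xi> \<in> cbox (0, 0) (R, R)" using Ob \<xi> by auto
  hence "0 \<le> fst \<xi>" "0 \<le> snd \<xi>" using cbox_Pair_iff[of "fst \<xi>" "snd \<xi>"] by auto
  hence "real_of_int (height d) \<le> max (2 * (knorm k * freq_max R) / kappa) (4 * pi * (knorm k * freq_max R) / c)"
    using knorm_powr_le_1[OF k \<tau>] \<gamma> res
    by (intro height_bound_of_resonance[OF _ _ freq_bound[OF \<xi>_box]]) auto
  also have "\<dots> = real n * max (2 * freq_max R / kappa) (4 * pi * freq_max R / c)"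
    unfolding n(1) by (simp add: max_mult_distrib_left mult_ac)
  also have "\<dots> \<le> real n * real_of_int M" using M by (intro mult_left_mono) auto
  also have "\<dots> = real_of_int (M * int n)" by simp
  finally have "height d \<le> M * int n" by (simp only: of_int_le_iff)
  hence "(k, d) \<in> {k. knorm k = real n} \<times> {d. height d \<le> M * int n}" using n(1) by simp
  moreover have "\<xi> \<in> bad_set Ob \<tau> \<gamma> k d" unfolding bad_set_def using res \<xi> by simp
  ultimately have "\<xi> \<in> shell Ob \<tau> \<gamma> M n" unfolding shell_def by blast
  moreover have "n = Suc (n - 1)" using n(2) by simp
  ultimately show "\<xi> \<in> (\<Union>n. shell Ob \<tau> \<gamma> M (Suc n))" by (metis UN_I UNIV_I)
qed

lemma shell_fmeasurable:
  assumes "Ob \<in> lmeasurable" "0 \<le> M"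
  shows "shell Ob \<tau> \<gamma> M n \<in> fmeasurable lebesgue"
proof (rule fmeasurableI2[OF assms(1)])
  show "shell Ob \<tau> \<gamma> M n \<subseteq> Ob" unfolding shell_def bad_set_def by auto
  have "finite ({k. knorm k = real n} \<times> {d. height d \<le> M * int n})"
    using finite_lattice_sphere card_divisors_upto(1) assms(2) by simp
  thus "shell Ob \<tau> \<gamma> M n \<in> sets lebesgue"
    unfolding shell_def bad_set_def using assms(1)
    by (intro sets.finite_UN) (auto intro: sets_resonance_sublevel)
qed

text \<open>Counting estimate: there are \<open>O(n\<^sup>2)\<close> wave vectors with \<open>|k| = n\<close> and \<open>O(M\<^sup>2 n\<^sup>2)\<close> divisors of
  height \<open>\<le> M n\<close>, each bad set being a strip of width \<open>O(\<gamma> M\<^sup>2 n\<^sup>2 n\<^sup>-\<^sup>\<tau>)\<close>.\<close>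
lemma measure_shell:
  assumes Ob: "Ob \<subseteq> cbox (-R, -R) (R, R)" "Ob \<in> sets lebesgue"
    and R: "0 \<le> R" and \<gamma>: "0 \<le> \<gamma>" and M: "1 \<le> M" and n: "1 \<le> n"
  shows "measure lebesgue (shell Ob \<tau> \<gamma> M n) \<le> 51840 * pi * R * (real_of_int M)^4 * \<gamma> * real n powr (6 - \<tau>)"
proof -
  let ?L = "M * int n"
  let ?I = "{k. knorm k = real n} \<times> {d. height d \<le> ?L}"
  let ?b = "16 * pi * R * (\<gamma> * (4 * (real_of_int ?L)^2) * real n powr (- \<tau>))"
  have "1 * 1 \<le> ?L" using M n by (intro mult_mono) auto
  hence L: "1 \<le> ?L" by simp
  have bad: "measure lebesgue (bad_set Ob \<tau> \<gamma> k d) \<le> ?b" if "(k, d) \<in> ?I" for k d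
  proof -
    let ?\<delta> = "real n powr (- \<tau>)"
    have k: "k \<noteq> (0, 0)" "knorm k = real n" using that n by (auto simp: knorm_def)
    have "\<gamma> * weight d * ?\<delta> \<le> \<gamma> * (4 * (real_of_int ?L)^2) * ?\<delta>"
      using weight_le[of d ?L] that L \<gamma> by (intro mult_right_mono mult_left_mono) auto
    moreover have "0 \<le> \<gamma> * (4 * (real_of_int ?L)^2) * ?\<delta>" using \<gamma> by simp
    ultimately have "16 * pi * R * max (\<gamma> * weight d * ?\<delta>) 0 \<le> ?b"
      using R by (intro mult_left_mono) auto
    thus ?thesis unfolding bad_set_def k(2)
      using measure_resonance_sublevel[OF k(1) Ob(1) R] by (rule order_trans[rotated])
  qed
  have card: "real (card ?I) \<le> 9 * (real n)^2 * (90 * (real_of_int ?L)^2)"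
    by (rule card_shell_index[OF L n])
  have fin: "finite ?I" using finite_lattice_sphere card_divisors_upto(1) L by simp
  have "measure lebesgue (shell Ob \<tau> \<gamma> M n) \<le> (\<Sum>p \<in> ?I. measure lebesgue (case_prod (bad_set Ob \<tau> \<gamma>) p))"
    unfolding shell_def
  proof (rule measure_UNION_le[OF fin])
    fix p show "case_prod (bad_set Ob \<tau> \<gamma>) p \<in> sets lebesgue"
      by (cases p) (simp add: bad_set_def sets_resonance_sublevel[OF Ob(2)])
  qed
  also have "\<dots> \<le> real (card ?I) * ?b" using bad by (intro sum_bounded_above) auto
  also have "\<dots> \<le> 9 * (real n)^2 * (90 * (real_of_int ?L)^2) * ?b"
    using card R \<gamma> by (intro mult_right_mono) auto
  also have "\<dots> = 51840 * pi * R * (real_of_int M)^4 * \<gamma> * (real n ^ 6 * real n powr (- \<tau>))"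
    by (simp add: power_mult_distrib eval_nat_numeral mult_ac)
  also have "real n ^ 6 * real n powr (- \<tau>) = real n powr (6 - \<tau>)"
    using n by (simp add: powr_diff powr_minus divide_inverse powr_numeral)
  finally show ?thesis .
qed

text \<open>The series \<open>\<Sum>n. n\<^sup>6\<^sup>-\<^sup>\<tau>\<close> converges exactly when \<open>\<tau> > 7\<close>; this fixes \<open>\<tau>\<^sub>0 = 7\<close>.\<close>
lemma summable_shifted_powr: "7 < \<tau> \<Longrightarrow> summable (\<lambda>n. real (Suc n) powr (6 - \<tau>))"
  using summable_real_powr_iff[of "6 - \<tau>"] summable_Suc_iff[of "\<lambda>n. real n powr (6 - \<tau>)"] by simp

lemma measure_resonant_le:
  assumes Ob: "Ob \<subseteq> cbox (0, 0) (R, R)" "Ob \<in> lmeasurable" and R: "0 \<le> R" and \<tau>: "7 < \<tau>"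
    and \<gamma>: "0 \<le> \<gamma>" "\<gamma> \<le> kappa / 4" "\<gamma> \<le> c / (4 * pi)"
    and M: "max (2 * freq_max R / kappa) (4 * pi * freq_max R / c) \<le> real_of_int M" "1 \<le> M"
  shows "measure lebesgue (Ob - O0 n1 n2 c eps Ob \<tau> \<gamma>)
    \<le> 51840 * pi * R * (real_of_int M)^4 * \<gamma> * (\<Sum>n. real (Suc n) powr (6 - \<tau>))"
proof -
  let ?K = "51840 * pi * R * (real_of_int M)^4 * \<gamma>"
  have Ob_sym: "Ob \<subseteq> cbox (-R, -R) (R, R)"
  proof
    fix \<xi> assume "\<xi> \<in> Ob"
    hence "\<xi> \<in> cbox (0, 0) (R, R)" using Ob(1) by blast
    thus "\<xi> \<in> cbox (-R, -R) (R, R)" using R cbox_Pair_iff[of "fst \<xi>" "snd \<xi>"] by auto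
  qed
  have "measure lebesgue (Ob - O0 n1 n2 c eps Ob \<tau> \<gamma>) \<le> (\<Sum>n. ?K * real (Suc n) powr (6 - \<tau>))"
  proof (rule measure_le_suminf_of_cover)
    show "Ob - O0 n1 n2 c eps Ob \<tau> \<gamma> \<subseteq> (\<Union>n. shell Ob \<tau> \<gamma> M (Suc n))"
      using \<tau> \<gamma> M(1) by (intro nonresonant_cover[OF Ob(1)]) auto
    show "shell Ob \<tau> \<gamma> M (Suc n) \<in> fmeasurable lebesgue" for n
      using Ob(2) M(2) by (intro shell_fmeasurable) auto
    show "measure lebesgue (shell Ob \<tau> \<gamma> M (Suc n)) \<le> ?K * real (Suc n) powr (6 - \<tau>)" for n
      using measure_shell[OF Ob_sym fmeasurableD[OF Ob(2)] R \<gamma>(1) M(2), of "Suc n" \<tau>] by simp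
    show "summable (\<lambda>n. ?K * real (Suc n) powr (6 - \<tau>))"
      using summable_shifted_powr[OF \<tau>] by (rule summable_mult)
  qed
  also have "\<dots> = ?K * (\<Sum>n. real (Suc n) powr (6 - \<tau>))"
    using suminf_mult[OF summable_shifted_powr[OF \<tau>]] by simp
  finally show ?thesis .
qed

text \<open>The proposition inside the locale: \<open>\<gamma>\<^sub>0\<close> is the threshold of the index bound, and \<open>M\<close> is the
  index growth rate determined by the size of \<open>\<O>\<close>.\<close>
theorem measure_resonant_parameters:
  assumes Ob: "bounded Ob" "Ob \<subseteq> {\<xi>. 0 < fst \<xi> \<and> 0 < snd \<xi>}" "Ob \<in> sets lebesgue" and \<tau>: "7 < \<tau>"
  shows "\<exists>\<gamma>0 > 0. \<exists>C > 0. \<forall>\<gamma>. 0 < \<gamma> \<and> \<gamma> \<le> \<gamma>0 \<longrightarrow> measure lebesgue (Ob - O0 n1 n2 c eps Ob \<tau> \<gamma>) \<le> C * \<gamma>"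
proof -
  obtain R where R: "0 < R" "Ob \<subseteq> cbox (0, 0) (R, R)" using bounded_positive_subset_box[OF Ob(1,2)] by blast
  have Ob_fin: "Ob \<in> lmeasurable" using bounded_set_imp_lmeasurable[OF Ob(1,3)] .
  let ?x = "max (2 * freq_max R / kappa) (4 * pi * freq_max R / c)"
  define M :: int where "M = max 1 \<lceil>?x\<rceil>"
  have "?x \<le> real_of_int \<lceil>?x\<rceil>" by (rule le_of_int_ceiling)
  also have "\<dots> \<le> real_of_int M" unfolding M_def by simp
  finally have M: "?x \<le> real_of_int M" .
  have M1: "1 \<le> M" unfolding M_def by simp
  define C where "C = 51840 * pi * R * (real_of_int M)^4 * (\<Sum>n. real (Suc n) powr (6 - \<tau>)) + 1"
  have "0 \<le> (\<Sum>n. real (Suc n) powr (6 - \<tau>))" using summable_shifted_powr[OF \<tau>] by (intro suminf_nonneg) auto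
  hence "0 \<le> 51840 * pi * R * (real_of_int M)^4 * (\<Sum>n. real (Suc n) powr (6 - \<tau>))"
    using R(1) by (intro mult_nonneg_nonneg) auto
  hence C: "0 < C" unfolding C_def by (rule add_nonneg_pos) simp
  have "measure lebesgue (Ob - O0 n1 n2 c eps Ob \<tau> \<gamma>) \<le> C * \<gamma>"
    if "0 < \<gamma>" "\<gamma> \<le> min (kappa / 4) (c / (4 * pi))" for \<gamma>
    using measure_resonant_le[OF R(2) Ob_fin less_imp_le[OF R(1)] \<tau> _ _ _ M M1, of \<gamma>] that
    unfolding C_def by (simp add: algebra_simps)
  moreover have "0 < min (kappa / 4) (c / (4 * pi))" using kappa_pos c_pos by simp
  ultimately show ?thesis using C by (intro exI[of _ "min (kappa / 4) (c / (4 * pi))"] conjI exI[of _ C] allI impI) auto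
qed

end

theorem proposition4p2:
  fixes n1 n2 :: int and c eps :: real and Ob :: "(real \<times> real) set"
  assumes "0 < n1" "n1 < n2" "odd n1" "n2 - n1 = 4"
    and "c > 0" "eps > 0" "1 / eps ^ 4 > c / (2 * pi)"
    and "bounded Ob" "Ob \<subseteq> {xi. fst xi > 0 \<and> snd xi > 0}"
    and "Ob \<in> sets lebesgue"
  shows "\<exists>\<tau>0. \<forall>\<tau> > \<tau>0. \<exists>\<gamma>0 > 0. \<exists>C > 0. \<forall>\<gamma>. 0 < \<gamma> \<and> \<gamma> \<le> \<gamma>0 \<longrightarrow>
           measure lebesgue (Ob - O0 n1 n2 c eps Ob \<tau> \<gamma>) \<le> C * \<gamma>"
proof -
  interpret two_mode_model n1 n2 c eps
    using assms(1,3,4,5,7) by unfold_locales auto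
  show ?thesis
    using measure_resonant_parameters[OF assms(8,9,10)] by (intro exI[of _ 7]) auto
qed

end
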